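(* Let $\mathcal O\subseteq\mathcal O'$ be orders in the same number field $F$, let $\mathfrak m$ be an $\mathcal O'$-ideal (hence also an $\mathcal O$-ideal), and let $S$ be a subset of the real embeddings of $F$. Then the map $\mathrm{Cl}_{\mathfrak m,S}(\mathcal O)\to\mathrm{Cl}_{\mathfrak m,S}(\mathcal O')$ induced by extension of ideals $\mathfrak a\mapsto\mathfrak a\mathcal O'$ is an isomorphism.
   Context: For an order $\mathcal O$, ideal $\mathfrak m$ and set $S$ of real embeddings: an integral ideal $\mathfrak a$ is coprime to $\mathfrak m$ if $\mathfrak a+\mathfrak m=\mathcal O$, and a fractional ideal is coprime to $\mathfrak m$ if it is $\mathfrak a\mathfrak b^{-1}$ with $\mathfrak a$ integral, $\mathfrak b$ invertible integral, both coprime to $\mathfrak m$. $J^*_{\mathfrak m}(\mathcal O)$ is the group of invertible fractional $\mathcal O$-ideals coprime to $\mathfrak m$, $P_{\mathfrak m,S}(\mathcal O)$ is the subgroup of principal ideals $\alpha\mathcal O$ with $\alpha\equiv1\pmod{\mathfrak m}$ and $\rho(\alpha)>0$ for $\rho\in S$, and $\mathrm{Cl}_{\mathfrak m,S}(\mathcal O)=J^*_{\mathfrak m}(\mathcal O)/P_{\mathfrak m,S}(\mathcal O)$. *)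

theory Defs
  imports "HOL-Analysis.Analysis" "HOL-Algebra.Coset"
begin

text \<open>A number field is modelled as a subfield F of the complex numbers that is
finite-dimensional over the rationals.\<close>

definition subring_of :: "complex set \<Rightarrow> bool" where
  "subring_of R \<longleftrightarrow> 1 \<in> R \<and> (\<forall>x\<in>R. \<forall>y\<in>R. x + y \<in> R \<and> x - y \<in> R \<and> x * y \<in> R)"

definition number_field :: "complex set \<Rightarrow> bool" where
  "number_field F \<longleftrightarrow> subring_of F \<and> (\<forall>x\<in>F. x \<noteq> 0 \<longrightarrow> inverse x \<in> F) \<and>
     (\<exists>B. finite B \<and> B \<subseteq> F \<and> F \<subseteq> {\<Sum>b\<in>B. of_rat (c b) * b | c. True})"

text \<open>An order of F: a subring of F which is a finitely generated Z-module
spanning F over Q (i.e. a full-rank lattice).\<close>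

definition order_of :: "complex set \<Rightarrow> complex set \<Rightarrow> bool" where
  "order_of F R \<longleftrightarrow> number_field F \<and> R \<subseteq> F \<and> subring_of R \<and>
     (\<exists>B. finite B \<and> B \<subseteq> R \<and> R = {\<Sum>b\<in>B. of_int (c b) * b | c. True}) \<and>
     (\<forall>x\<in>F. \<exists>n::nat. n > 0 \<and> of_nat n * x \<in> R)"

definition submodule_of :: "complex set \<Rightarrow> complex set \<Rightarrow> complex set \<Rightarrow> bool" where
  "submodule_of F R I \<longleftrightarrow> I \<subseteq> F \<and> 0 \<in> I \<and>
     (\<forall>x\<in>I. \<forall>y\<in>I. x + y \<in> I) \<and> (\<forall>r\<in>R. \<forall>x\<in>I. r * x \<in> I)"

definition ideal_of :: "complex set \<Rightarrow> complex set \<Rightarrow> bool" where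
  "ideal_of R I \<longleftrightarrow> I \<subseteq> R \<and> submodule_of R R I"

definition isum :: "complex set \<Rightarrow> complex set \<Rightarrow> complex set" where
  "isum I J = {x + y | x y. x \<in> I \<and> y \<in> J}"

definition ideal_prod :: "complex set \<Rightarrow> complex set \<Rightarrow> complex set" where
  "ideal_prod I J = {x. \<exists>(n::nat) f g. (\<forall>k<n. f k \<in> I \<and> g k \<in> J) \<and> x = (\<Sum>k<n. f k * g k)}"

definition frac_ideal :: "complex set \<Rightarrow> complex set \<Rightarrow> complex set \<Rightarrow> bool" where
  "frac_ideal F R I \<longleftrightarrow> submodule_of F R I \<and> I \<noteq> {0} \<and>
     (\<exists>d\<in>R. d \<noteq> 0 \<and> (\<forall>x\<in>I. d * x \<in> R))"

definition invertible_frac :: "complex set \<Rightarrow> complex set \<Rightarrow> complex set \<Rightarrow> bool" where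
  "invertible_frac F R I \<longleftrightarrow> frac_ideal F R I \<and> (\<exists>J. frac_ideal F R J \<and> ideal_prod I J = R)"

text \<open>The inverse (R : b) of a fractional ideal; for invertible b this is b^{-1}.\<close>

definition iinv :: "complex set \<Rightarrow> complex set \<Rightarrow> complex set \<Rightarrow> complex set" where
  "iinv F R I = {x\<in>F. \<forall>y\<in>I. x * y \<in> R}"

definition coprime_int :: "complex set \<Rightarrow> complex set \<Rightarrow> complex set \<Rightarrow> bool" where
  "coprime_int R m a \<longleftrightarrow> ideal_of R a \<and> isum a m = R"

definition coprime_frac :: "complex set \<Rightarrow> complex set \<Rightarrow> complex set \<Rightarrow> complex set \<Rightarrow> bool" where
  "coprime_frac F R m I \<longleftrightarrow> (\<exists>a b. coprime_int R m a \<and> coprime_int R m b \<and>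
     invertible_frac F R b \<and> I = ideal_prod a (iinv F R b))"

definition Jstar :: "complex set \<Rightarrow> complex set \<Rightarrow> complex set \<Rightarrow> complex set set" where
  "Jstar F R m = {I. invertible_frac F R I \<and> coprime_frac F R m I}"

text \<open>alpha = 1 mod m: alpha = a/b with a, b in R, both coprime to m, a - b in m.\<close>

definition principal :: "complex set \<Rightarrow> complex \<Rightarrow> complex set" where
  "principal R \<alpha> = {\<alpha> * x | x. x \<in> R}"

definition cong1 :: "complex set \<Rightarrow> complex set \<Rightarrow> complex \<Rightarrow> bool" where
  "cong1 R m \<alpha> \<longleftrightarrow> (\<exists>a\<in>R. \<exists>b\<in>R. b \<noteq> 0 \<and> \<alpha> = a / b \<and>
     isum (principal R a) m = R \<and> isum (principal R b) m = R \<and> a - b \<in> m)"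

definition real_embedding :: "complex set \<Rightarrow> (complex \<Rightarrow> real) \<Rightarrow> bool" where
  "real_embedding F \<rho> \<longleftrightarrow> \<rho> 1 = 1 \<and>
     (\<forall>x\<in>F. \<forall>y\<in>F. \<rho> (x + y) = \<rho> x + \<rho> y \<and> \<rho> (x * y) = \<rho> x * \<rho> y)"

definition Pms :: "complex set \<Rightarrow> complex set \<Rightarrow> complex set \<Rightarrow> (complex \<Rightarrow> real) set \<Rightarrow> complex set set" where
  "Pms F R m S = {principal R \<alpha> | \<alpha>. \<alpha> \<in> F \<and> \<alpha> \<noteq> 0 \<and> cong1 R m \<alpha> \<and> (\<forall>\<rho>\<in>S. \<rho> \<alpha> > 0)}"

definition Jgrp :: "complex set \<Rightarrow> complex set \<Rightarrow> complex set \<Rightarrow> complex set monoid" where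
  "Jgrp F R m = \<lparr>carrier = Jstar F R m, mult = ideal_prod, one = R\<rparr>"

definition Clms :: "complex set \<Rightarrow> complex set \<Rightarrow> complex set \<Rightarrow> (complex \<Rightarrow> real) set \<Rightarrow> complex set set monoid" where
  "Clms F R m S = Jgrp F R m Mod Pms F R m S"

end

theory Submission
  imports Defs
begin

(* Extension a |-> aO' is multiplicative and maps J*_m(O) into J*_m(O') and P_{m,S}(O) into
   P_{m,S}(O'), so it induces a homomorphism of ray class groups. Everything rests on m being an
   ideal of both orders. For an O-ideal a coprime to m, writing 1 = x + y with x in a and y in m
   shows aO' \<inter> O = a; dually every O'-ideal b coprime to m equals (b \<inter> O)O'; and a is
   invertible as soon as aO' is, because a (m (aO')^-1) = m and hence a (O + m (aO')^-1) = O.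

   Injectivity: if aO' = \<alpha>O' with \<alpha> = u/v congruent to 1 mod m over O', pick t in O' with
   vt = 1 mod m; then ut and vt lie in O, so \<alpha> = ut/vt is congruent to 1 mod m over O, and
   comparing extensions of integral ideals coprime to m gives a = \<alpha>O.

   Surjectivity: for J = c d^-1 in J*_m(O') choose x in d, x \<noteq> 0, x = 1 mod m. Then \<alpha> = x^2 is
   positive at every real embedding and \<alpha> d^-1 is integral and coprime to m, so J \<alpha>O' is an
   integral ideal coprime to m, hence the extension of an element of J*_m(O). *)

section \<open>Submodules of the complex numbers and their products\<close>

abbreviation module_over :: "complex set \<Rightarrow> complex set \<Rightarrow> bool" where
  "module_over R X \<equiv> submodule_of UNIV R X"

lemma module_overI:
  assumes "0 \<in> X" "\<And>x y. x \<in> X \<Longrightarrow> y \<in> X \<Longrightarrow> x + y \<in> X"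
    "\<And>r x. r \<in> R \<Longrightarrow> x \<in> X \<Longrightarrow> r * x \<in> X"
  shows "module_over R X"
  using assms unfolding submodule_of_def by blast

lemma module_over_zero: "module_over R X \<Longrightarrow> 0 \<in> X"
  and module_over_add: "module_over R X \<Longrightarrow> x \<in> X \<Longrightarrow> y \<in> X \<Longrightarrow> x + y \<in> X"
  and module_over_smult: "module_over R X \<Longrightarrow> r \<in> R \<Longrightarrow> x \<in> X \<Longrightarrow> r * x \<in> X"
  unfolding submodule_of_def by blast+

lemma module_over_antimono: "module_over R' X \<Longrightarrow> R \<subseteq> R' \<Longrightarrow> module_over R X"
  unfolding submodule_of_def by blast

lemma isum_memI: "u \<in> I \<Longrightarrow> v \<in> J \<Longrightarrow> u + v \<in> isum I J"
  unfolding isum_def by blast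

lemma isum_memE:
  assumes "x \<in> isum I J"
  obtains u v where "u \<in> I" "v \<in> J" "x = u + v"
  using assms unfolding isum_def by blast

lemma module_over_isum:
  assumes I: "module_over R I" and J: "module_over R J"
  shows "module_over R (isum I J)"
proof (rule module_overI)
  show "0 \<in> isum I J"
    using isum_memI[OF module_over_zero[OF I] module_over_zero[OF J]] by simp
  show "x + y \<in> isum I J" if "x \<in> isum I J" "y \<in> isum I J" for x y
  proof -
    obtain u v u' v' where uv: "u \<in> I" "v \<in> J" "x = u + v" "u' \<in> I" "v' \<in> J" "y = u' + v'"
      by (meson \<open>x \<in> isum I J\<close> \<open>y \<in> isum I J\<close> isum_memE)
    have "(u + u') + (v + v') \<in> isum I J"
      using uv module_over_add[OF I] module_over_add[OF J] by (intro isum_memI) auto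
    then show ?thesis
      using uv by (simp add: ac_simps)
  qed
  show "r * x \<in> isum I J" if "r \<in> R" "x \<in> isum I J" for r x
  proof -
    obtain u v where uv: "u \<in> I" "v \<in> J" "x = u + v"
      using \<open>x \<in> isum I J\<close> by (rule isum_memE)
    have "r * u + r * v \<in> isum I J"
      using uv \<open>r \<in> R\<close> module_over_smult[OF I] module_over_smult[OF J] by (intro isum_memI) auto
    then show ?thesis
      using uv by (simp add: distrib_left)
  qed
qed

lemma ideal_prod_mem: "x \<in> I \<Longrightarrow> y \<in> J \<Longrightarrow> x * y \<in> ideal_prod I J"
  unfolding ideal_prod_def
  by (intro CollectI exI[of _ 1] exI[of _ "\<lambda>_. x"] exI[of _ "\<lambda>_. y"]) auto

lemma zero_in_ideal_prod: "0 \<in> ideal_prod I J"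
  unfolding ideal_prod_def by (intro CollectI exI[of _ 0]) auto

lemma ideal_prod_add_prod:
  assumes "z \<in> ideal_prod I J" "x \<in> I" "y \<in> J"
  shows "z + x * y \<in> ideal_prod I J"
proof -
  obtain n :: nat and f g where fg: "\<forall>k<n. f k \<in> I \<and> g k \<in> J" "z = (\<Sum>k<n. f k * g k)"
    using assms(1) unfolding ideal_prod_def by blast
  have "\<forall>k<Suc n. (f(n := x)) k \<in> I \<and> (g(n := y)) k \<in> J"
    using fg(1) assms by (auto simp: less_Suc_eq)
  moreover have "z + x * y = (\<Sum>k<Suc n. (f(n := x)) k * (g(n := y)) k)"
    using fg(2) by simp
  ultimately show ?thesis
    unfolding ideal_prod_def by blast
qed

lemma ideal_prod_induct [consumes 1, case_names zero add_prod]: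
  assumes "z \<in> ideal_prod I J" and "P 0"
    and "\<And>w x y. P w \<Longrightarrow> x \<in> I \<Longrightarrow> y \<in> J \<Longrightarrow> P (w + x * y)"
  shows "P z"
proof -
  obtain n :: nat and f g where fg: "\<forall>k<n. f k \<in> I \<and> g k \<in> J" "z = (\<Sum>k<n. f k * g k)"
    using assms(1) unfolding ideal_prod_def by blast
  have "P (\<Sum>k<n. f k * g k)"
    using fg(1) by (induction n) (auto intro: assms(2,3))
  then show ?thesis
    using fg(2) by simp
qed

lemma ideal_prod_add:
  assumes "x \<in> ideal_prod I J" "y \<in> ideal_prod I J"
  shows "x + y \<in> ideal_prod I J"
  using assms(2)
proof (induction rule: ideal_prod_induct)
  case zero
  then show ?case using assms(1) by simp
next
  case (add_prod w u v)
  then show ?case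
    using ideal_prod_add_prod[of "x + w" I J u v] by (simp add: add.assoc)
qed

lemma ideal_prod_subsetI:
  assumes "0 \<in> K" "\<And>x y. x \<in> K \<Longrightarrow> y \<in> K \<Longrightarrow> x + y \<in> K"
    and "\<And>x y. x \<in> I \<Longrightarrow> y \<in> J \<Longrightarrow> x * y \<in> K"
  shows "ideal_prod I J \<subseteq> K"
proof
  fix z assume "z \<in> ideal_prod I J"
  then show "z \<in> K"
    by (induction rule: ideal_prod_induct) (use assms in auto)
qed

lemma ideal_prod_subset_module:
  "module_over R K \<Longrightarrow> (\<And>x y. x \<in> I \<Longrightarrow> y \<in> J \<Longrightarrow> x * y \<in> K) \<Longrightarrow> ideal_prod I J \<subseteq> K"
  by (rule ideal_prod_subsetI) (auto intro: module_over_zero module_over_add)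

lemma ideal_prod_commute: "ideal_prod I J = ideal_prod J I"
proof -
  have "ideal_prod I J \<subseteq> ideal_prod J I" for I J
    by (rule ideal_prod_subsetI)
      (auto intro: zero_in_ideal_prod ideal_prod_add, metis ideal_prod_mem mult.commute)
  then show ?thesis
    by blast
qed

lemma ideal_prod_assoc: "ideal_prod (ideal_prod I J) K = ideal_prod I (ideal_prod J K)"
proof -
  have assoc_subset: "ideal_prod (ideal_prod I J) K \<subseteq> ideal_prod I (ideal_prod J K)" for I J K
  proof (rule ideal_prod_subsetI)
    fix z w assume "z \<in> ideal_prod I J" "w \<in> K"
    then show "z * w \<in> ideal_prod I (ideal_prod J K)"
    proof (induction rule: ideal_prod_induct)
      case (add_prod v x y)
      then have "x * (y * w) \<in> ideal_prod I (ideal_prod J K)"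
        by (intro ideal_prod_mem)
      with add_prod show ?case
        by (simp add: distrib_right mult.assoc ideal_prod_add)
    qed (simp add: zero_in_ideal_prod)
  qed (auto simp: zero_in_ideal_prod ideal_prod_add)
  have "ideal_prod I (ideal_prod J K) = ideal_prod (ideal_prod K J) I"
    by (simp add: ideal_prod_commute)
  also have "\<dots> \<subseteq> ideal_prod K (ideal_prod J I)"
    by (rule assoc_subset)
  also have "\<dots> = ideal_prod (ideal_prod I J) K"
    by (simp add: ideal_prod_commute)
  finally show ?thesis
    using assoc_subset by blast
qed

interpretation ideal_prod: abel_semigroup ideal_prod
  by unfold_locales (rule ideal_prod_assoc, rule ideal_prod_commute)

lemma ideal_prod_mono: "I \<subseteq> I' \<Longrightarrow> J \<subseteq> J' \<Longrightarrow> ideal_prod I J \<subseteq> ideal_prod I' J'"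
  unfolding ideal_prod_def by blast

lemma module_over_ideal_prod:
  assumes J: "module_over R J"
  shows "module_over R (ideal_prod I J)"
proof (rule module_overI)
  fix r z assume "r \<in> R" "z \<in> ideal_prod I J"
  from \<open>z \<in> ideal_prod I J\<close> show "r * z \<in> ideal_prod I J"
  proof (induction rule: ideal_prod_induct)
    case (add_prod w x y)
    then have "x * (r * y) \<in> ideal_prod I J"
      using module_over_smult[OF J \<open>r \<in> R\<close>] by (intro ideal_prod_mem)
    with add_prod show ?case
      by (simp add: distrib_left mult.left_commute ideal_prod_add)
  qed (simp add: zero_in_ideal_prod)
qed (auto simp: zero_in_ideal_prod ideal_prod_add)

lemma module_over_ideal_prod_left: "module_over R I \<Longrightarrow> module_over R (ideal_prod I J)"
  using module_over_ideal_prod[of R I J] by (simp add: ideal_prod_commute)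

lemma ideal_prod_unit_left:
  assumes "1 \<in> R" "module_over R I"
  shows "ideal_prod R I = I"
proof
  show "ideal_prod R I \<subseteq> I"
    using assms(2) by (rule ideal_prod_subset_module) (rule module_over_smult[OF assms(2)])
  show "I \<subseteq> ideal_prod R I"
    using ideal_prod_mem[OF assms(1)] by fastforce
qed

lemma ideal_prod_unit_right: "1 \<in> R \<Longrightarrow> module_over R I \<Longrightarrow> ideal_prod I R = I"
  by (metis ideal_prod_unit_left ideal_prod_commute)

lemma ideal_prod_zero_left: "ideal_prod {0} J = {0}"
proof
  show "ideal_prod {0} J \<subseteq> {0}"
    by (rule ideal_prod_subsetI) auto
qed (simp add: zero_in_ideal_prod)

section \<open>Fractional ideals of an order\<close>

locale nf_order =
  fixes F R :: "complex set"
  assumes order: "order_of F R"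
begin

lemma F_one: "1 \<in> F"
  and F_add: "x \<in> F \<Longrightarrow> y \<in> F \<Longrightarrow> x + y \<in> F"
  and F_mult: "x \<in> F \<Longrightarrow> y \<in> F \<Longrightarrow> x * y \<in> F"
  and F_inverse: "x \<in> F \<Longrightarrow> inverse x \<in> F"
  using order unfolding order_of_def number_field_def subring_of_def
  by (metis inverse_zero right_minus_eq)+

lemma R_subset_F: "R \<subseteq> F"
  and R_one: "1 \<in> R"
  and R_add: "x \<in> R \<Longrightarrow> y \<in> R \<Longrightarrow> x + y \<in> R"
  and R_diff: "x \<in> R \<Longrightarrow> y \<in> R \<Longrightarrow> x - y \<in> R"
  and R_mult: "x \<in> R \<Longrightarrow> y \<in> R \<Longrightarrow> x * y \<in> R"
  and R_denominator: "x \<in> F \<Longrightarrow> \<exists>n::nat. n > 0 \<and> of_nat n * x \<in> R"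
  using order unfolding order_of_def subring_of_def by blast+

lemma R_zero: "0 \<in> R"
  using R_diff[OF R_one R_one] by simp

lemma R_of_nat: "of_nat n \<in> R"
  by (induction n) (simp_all add: R_zero R_one R_add)

lemma module_over_R: "module_over R R"
  by (rule module_overI) (auto intro: R_zero R_add R_mult)

lemma ideal_prod_R_R: "ideal_prod R R = R"
  by (rule ideal_prod_unit_left[OF R_one module_over_R])

lemma ideal_of_iff: "ideal_of R I \<longleftrightarrow> I \<subseteq> R \<and> module_over R I"
  unfolding ideal_of_def submodule_of_def by blast

lemma frac_ideal_iff:
  "frac_ideal F R I \<longleftrightarrow>
     I \<subseteq> F \<and> module_over R I \<and> I \<noteq> {0} \<and> (\<exists>d\<in>R. d \<noteq> 0 \<and> (\<forall>x\<in>I. d * x \<in> R))"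
  unfolding frac_ideal_def submodule_of_def by blast

lemma frac_ideal_subset: "frac_ideal F R I \<Longrightarrow> I \<subseteq> F"
  and frac_ideal_module: "frac_ideal F R I \<Longrightarrow> module_over R I"
  by (simp_all add: frac_ideal_iff)

lemma frac_ideal_nonzero: "frac_ideal F R I \<Longrightarrow> \<exists>x\<in>I. x \<noteq> 0"
  using module_over_zero unfolding frac_ideal_iff by blast

lemma frac_ideal_of_ideal: "ideal_of R I \<Longrightarrow> I \<noteq> {0} \<Longrightarrow> frac_ideal F R I"
  unfolding frac_ideal_iff ideal_of_iff using R_subset_F R_one by (auto intro!: bexI[of _ 1])

lemma ideal_prod_subset_F: "I \<subseteq> F \<Longrightarrow> J \<subseteq> F \<Longrightarrow> ideal_prod I J \<subseteq> F"
  using R_subset_F R_zero F_add F_mult by (intro ideal_prod_subsetI) blast+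

lemma ideal_prod_subset_R: "I \<subseteq> R \<Longrightarrow> J \<subseteq> R \<Longrightarrow> ideal_prod I J \<subseteq> R"
  using R_zero R_add R_mult by (intro ideal_prod_subsetI) blast+

lemma frac_ideal_ideal_prod:
  assumes I: "frac_ideal F R I" and J: "frac_ideal F R J"
  shows "frac_ideal F R (ideal_prod I J)"
proof -
  obtain d e where de: "d \<in> R" "d \<noteq> 0" "\<forall>x\<in>I. d * x \<in> R" "e \<in> R" "e \<noteq> 0" "\<forall>y\<in>J. e * y \<in> R"
    using I J unfolding frac_ideal_iff by blast
  obtain x y where xy: "x \<in> I" "x \<noteq> 0" "y \<in> J" "y \<noteq> 0"
    using frac_ideal_nonzero I J by blast
  have "x * y \<in> ideal_prod I J" "x * y \<noteq> 0"
    using xy by (simp_all add: ideal_prod_mem)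
  moreover have "ideal_prod I J \<subseteq> {z. d * e * z \<in> R}"
  proof (rule ideal_prod_subsetI)
    fix x y assume "x \<in> I" "y \<in> J"
    then have "(d * x) * (e * y) \<in> R"
      using de R_mult by simp
    then show "x * y \<in> {z. d * e * z \<in> R}"
      by (simp add: ac_simps)
  qed (auto simp: R_zero R_add distrib_left)
  ultimately show ?thesis
    unfolding frac_ideal_iff
    using ideal_prod_subset_F frac_ideal_subset[OF I] frac_ideal_subset[OF J] de R_mult
      module_over_ideal_prod frac_ideal_module[OF J]
    by (intro conjI bexI[of _ "d * e"]) auto
qed

lemma frac_ideal_R: "frac_ideal F R R"
  using frac_ideal_of_ideal[of R] R_one module_over_R unfolding ideal_of_iff by fastforce

lemma iinv_unique:
  assumes I: "frac_ideal F R I" and J: "frac_ideal F R J" and IJ: "ideal_prod I J = R"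
  shows "J = iinv F R I"
proof
  show "J \<subseteq> iinv F R I"
    using IJ frac_ideal_subset[OF J] ideal_prod_mem[of _ I _ J]
    unfolding iinv_def by (fastforce simp: mult.commute)
  show "iinv F R I \<subseteq> J"
  proof
    fix x assume x: "x \<in> iinv F R I"
    have "ideal_prod I J \<subseteq> {z. x * z \<in> J}"
    proof (rule ideal_prod_subsetI)
      fix y j assume "y \<in> I" "j \<in> J"
      then have "(x * y) * j \<in> J"
        using x module_over_smult[OF frac_ideal_module[OF J]] unfolding iinv_def by blast
      then show "y * j \<in> {z. x * z \<in> J}"
        by (simp add: ac_simps)
    qed (use frac_ideal_module[OF J] module_over_zero module_over_add in \<open>auto simp: distrib_left\<close>)
    then have "x * 1 \<in> J"
      using IJ R_one by blast
    then show "x \<in> J"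
      by simp
  qed
qed

lemma invertible_frac_iinv:
  assumes "invertible_frac F R I"
  shows "frac_ideal F R (iinv F R I)" and "ideal_prod I (iinv F R I) = R"
    and "invertible_frac F R (iinv F R I)"
proof -
  obtain J where J: "frac_ideal F R J" "ideal_prod I J = R" and I: "frac_ideal F R I"
    using assms unfolding invertible_frac_def by blast
  have "J = iinv F R I"
    using iinv_unique[OF I J] .
  then show "frac_ideal F R (iinv F R I)" "ideal_prod I (iinv F R I) = R"
    using J by auto
  then show "invertible_frac F R (iinv F R I)"
    using I unfolding invertible_frac_def by (auto simp: ideal_prod_commute)
qed

lemma invertible_frac_ideal_prod:
  assumes I: "invertible_frac F R I" and J: "invertible_frac F R J"
  shows "invertible_frac F R (ideal_prod I J)"
    and "iinv F R (ideal_prod I J) = ideal_prod (iinv F R I) (iinv F R J)"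
proof -
  have "ideal_prod (ideal_prod I J) (ideal_prod (iinv F R I) (iinv F R J))
      = ideal_prod (ideal_prod I (iinv F R I)) (ideal_prod J (iinv F R J))"
    by (simp add: ac_simps)
  then have inv: "ideal_prod (ideal_prod I J) (ideal_prod (iinv F R I) (iinv F R J)) = R"
    using invertible_frac_iinv(2)[OF I] invertible_frac_iinv(2)[OF J] ideal_prod_R_R by simp
  have frac: "frac_ideal F R (ideal_prod (iinv F R I) (iinv F R J))"
    using frac_ideal_ideal_prod invertible_frac_iinv(1) I J by blast
  have "frac_ideal F R (ideal_prod I J)"
    using frac_ideal_ideal_prod I J unfolding invertible_frac_def by blast
  then show "invertible_frac F R (ideal_prod I J)"
    and "iinv F R (ideal_prod I J) = ideal_prod (iinv F R I) (iinv F R J)"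
    using inv frac iinv_unique unfolding invertible_frac_def by auto
qed

lemma invertible_frac_R: "invertible_frac F R R"
  and iinv_R: "iinv F R R = R"
  using frac_ideal_R ideal_prod_R_R iinv_unique[OF frac_ideal_R frac_ideal_R]
  unfolding invertible_frac_def by auto

lemma ideal_prod_iinv_cancel:
  assumes "invertible_frac F R I" "module_over R M"
  shows "ideal_prod I (ideal_prod M (iinv F R I)) = M"
proof -
  have "ideal_prod I (ideal_prod M (iinv F R I)) = ideal_prod (ideal_prod I (iinv F R I)) M"
    by (simp add: ac_simps)
  then show ?thesis
    using invertible_frac_iinv(2)[OF assms(1)] ideal_prod_unit_left[OF R_one assms(2)] by simp
qed

lemma ideal_prod_cancel_right:
  assumes Z: "invertible_frac F R Z" and X: "module_over R X" and Y: "module_over R Y"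
    and eq: "ideal_prod X Z = ideal_prod Y Z"
  shows "X = Y"
proof -
  have "X = ideal_prod Z (ideal_prod X (iinv F R Z))"
    using ideal_prod_iinv_cancel[OF Z X] by simp
  also have "\<dots> = ideal_prod Z (ideal_prod Y (iinv F R Z))"
    using eq by (metis ideal_prod_assoc ideal_prod_commute)
  also have "\<dots> = Y"
    using ideal_prod_iinv_cancel[OF Z Y] .
  finally show ?thesis .
qed

lemma invertible_fracI:
  assumes I: "frac_ideal F R I" and J: "module_over R J" "J \<subseteq> F"
    and IJ: "ideal_prod I J = R"
  shows "invertible_frac F R I"
proof -
  obtain d where d: "d \<in> R" "d \<noteq> 0" "\<forall>x\<in>I. d * x \<in> R"
    using I unfolding frac_ideal_iff by blast
  obtain x where x: "x \<in> I" "x \<noteq> 0"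
    using frac_ideal_nonzero[OF I] by blast
  have "J \<noteq> {0}"
  proof
    assume "J = {0}"
    then have "R = {0}"
      using IJ ideal_prod_zero_left[of I] ideal_prod_commute by metis
    then show False
      using R_one by simp
  qed
  moreover have "d * x \<in> R" "d * x \<noteq> 0"
    using d x by auto
  moreover have "(d * x) * j \<in> R" if "j \<in> J" for j
    using d(1) ideal_prod_mem[OF x(1) that] IJ R_mult by (simp add: mult.assoc)
  ultimately have "frac_ideal F R J"
    unfolding frac_ideal_iff using J by blast
  with I IJ show ?thesis
    unfolding invertible_frac_def by blast
qed

lemma principal_mem: "x \<in> R \<Longrightarrow> a * x \<in> principal R a"
  unfolding principal_def by blast

lemma principal_memE:
  assumes "z \<in> principal R a"
  obtains x where "x \<in> R" "z = a * x"
  using assms unfolding principal_def by blast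

lemma generator_in_principal: "a \<in> principal R a"
  using principal_mem[OF R_one] by simp

lemma module_over_principal: "module_over R (principal R a)"
proof (rule module_overI)
  show "0 \<in> principal R a"
    using principal_mem[OF R_zero] by simp
  show "x + y \<in> principal R a" if "x \<in> principal R a" "y \<in> principal R a" for x y
    using that by (metis principal_memE principal_mem R_add distrib_left)
  show "r * x \<in> principal R a" if "r \<in> R" "x \<in> principal R a" for r x
    using that by (metis principal_memE principal_mem R_mult mult.left_commute)
qed

lemma principal_subset_R: "a \<in> R \<Longrightarrow> principal R a \<subseteq> R"
  using R_mult by (auto elim!: principal_memE)

lemma ideal_of_principal: "a \<in> R \<Longrightarrow> ideal_of R (principal R a)"
  unfolding ideal_of_iff using principal_subset_R module_over_principal by blast

lemma principal_one: "principal R 1 = R"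
  unfolding principal_def by simp

lemma ideal_prod_principal: "ideal_prod (principal R a) (principal R b) = principal R (a * b)"
proof
  show "ideal_prod (principal R a) (principal R b) \<subseteq> principal R (a * b)"
    using module_over_principal
  proof (rule ideal_prod_subset_module)
    fix x y assume "x \<in> principal R a" "y \<in> principal R b"
    then show "x * y \<in> principal R (a * b)"
      using principal_mem[OF R_mult] by (auto elim!: principal_memE simp: ac_simps)
  qed
  show "principal R (a * b) \<subseteq> ideal_prod (principal R a) (principal R b)"
    using ideal_prod_mem[OF principal_mem generator_in_principal]
    by (auto elim!: principal_memE simp: ac_simps)
qed

lemma frac_ideal_principal:
  assumes "a \<in> F" "a \<noteq> 0"
  shows "frac_ideal F R (principal R a)"
proof -
  obtain n :: nat where n: "n > 0" "of_nat n * a \<in> R"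
    using R_denominator assms(1) by blast
  have "principal R a \<subseteq> F"
    using assms(1) R_subset_F F_mult by (auto elim!: principal_memE)
  moreover have "principal R a \<noteq> {0}"
    using generator_in_principal assms(2) by auto
  moreover have "of_nat n * x \<in> R" if "x \<in> principal R a" for x
    using that R_mult[OF n(2)] by (auto elim!: principal_memE simp: mult.assoc)
  ultimately show ?thesis
    unfolding frac_ideal_iff using module_over_principal R_of_nat n(1)
    by (intro conjI bexI[of _ "of_nat n"]) auto
qed

lemma invertible_frac_principal:
  assumes "a \<in> F" "a \<noteq> 0"
  shows "invertible_frac F R (principal R a)"
    and "iinv F R (principal R a) = principal R (inverse a)"
proof -
  have inv: "ideal_prod (principal R a) (principal R (inverse a)) = R"
    using assms(2) by (simp add: ideal_prod_principal principal_one)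
  have "frac_ideal F R (principal R (inverse a))"
    using assms by (simp add: frac_ideal_principal F_inverse)
  with inv show "invertible_frac F R (principal R a)"
    and "iinv F R (principal R a) = principal R (inverse a)"
    using frac_ideal_principal[OF assms] iinv_unique unfolding invertible_frac_def by auto
qed

lemma real_embedding_mult_inverse:
  assumes "real_embedding F \<rho>" "x \<in> F" "x \<noteq> 0"
  shows "\<rho> x * \<rho> (inverse x) = 1"
  using assms F_inverse unfolding real_embedding_def by (metis right_inverse)

lemma real_embedding_inverse_pos:
  "real_embedding F \<rho> \<Longrightarrow> x \<in> F \<Longrightarrow> x \<noteq> 0 \<Longrightarrow> \<rho> x > 0 \<Longrightarrow> \<rho> (inverse x) > 0"
  using real_embedding_mult_inverse zero_less_mult_iff[of "\<rho> x" "\<rho> (inverse x)"] by force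

lemma real_embedding_square_pos:
  assumes "real_embedding F \<rho>" "x \<in> F" "x \<noteq> 0"
  shows "\<rho> (x * x) > 0"
proof -
  have "\<rho> x \<noteq> 0"
    using real_embedding_mult_inverse[OF assms] by auto
  then show ?thesis
    using assms(1,2) unfolding real_embedding_def by (simp add: not_square_less_zero order_less_le)
qed

end

section \<open>Ideals coprime to a modulus and ray class groups\<close>

lemma carrier_Jgrp [simp]: "carrier (Jgrp F R m) = Jstar F R m"
  and mult_Jgrp [simp]: "mult (Jgrp F R m) = ideal_prod"
  and one_Jgrp [simp]: "one (Jgrp F R m) = R"
  unfolding Jgrp_def by simp_all

locale nf_order_modulus = nf_order +
  fixes m :: "complex set"
  assumes modulus: "ideal_of R m"
begin

lemma m_subset_R: "m \<subseteq> R"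
  and module_over_m: "module_over R m"
  using modulus unfolding ideal_of_iff by blast+

lemma m_zero: "0 \<in> m"
  and m_add: "x \<in> m \<Longrightarrow> y \<in> m \<Longrightarrow> x + y \<in> m"
  and m_smult: "r \<in> R \<Longrightarrow> x \<in> m \<Longrightarrow> r * x \<in> m"
  using module_over_zero module_over_add module_over_smult module_over_m by blast+

lemma m_diff: "x \<in> m \<Longrightarrow> y \<in> m \<Longrightarrow> x - y \<in> m"
  using m_add[of x "(0 - 1) * y"] m_smult[OF R_diff[OF R_zero R_one]] by simp

lemma coprime_int_iff: "coprime_int R m a \<longleftrightarrow> ideal_of R a \<and> (\<exists>x\<in>a. \<exists>y\<in>m. x + y = 1)"
proof
  assume "coprime_int R m a"
  then show "ideal_of R a \<and> (\<exists>x\<in>a. \<exists>y\<in>m. x + y = 1)"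
    unfolding coprime_int_def using R_one by (metis isum_memE)
next
  assume "ideal_of R a \<and> (\<exists>x\<in>a. \<exists>y\<in>m. x + y = 1)"
  then obtain x y where a: "a \<subseteq> R" "module_over R a" and xy: "x \<in> a" "y \<in> m" "x + y = 1"
    unfolding ideal_of_iff by blast
  have "isum a m \<subseteq> R"
    using a(1) m_subset_R R_add by (auto elim!: isum_memE)
  moreover have "r \<in> isum a m" if "r \<in> R" for r
  proof -
    have "r * x + r * y \<in> isum a m"
      using module_over_smult[OF a(2) that xy(1)] m_smult[OF that xy(2)] by (rule isum_memI)
    then show ?thesis
      using xy(3) by (simp flip: distrib_left)
  qed
  ultimately show "coprime_int R m a"
    unfolding coprime_int_def using a ideal_of_iff by blast
qed

lemma coprime_intI: "ideal_of R a \<Longrightarrow> x \<in> a \<Longrightarrow> y \<in> m \<Longrightarrow> x + y = 1 \<Longrightarrow> coprime_int R m a"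
  using coprime_int_iff by blast

lemma coprime_int_ideal: "coprime_int R m a \<Longrightarrow> ideal_of R a"
  unfolding coprime_int_def by simp

lemma coprime_int_subset: "coprime_int R m a \<Longrightarrow> a \<subseteq> R"
  and coprime_int_module: "coprime_int R m a \<Longrightarrow> module_over R a"
  using coprime_int_ideal ideal_of_iff by blast+

lemma coprime_intE:
  assumes "coprime_int R m a"
  obtains x y where "x \<in> a" "y \<in> m" "x + y = 1"
  using assms coprime_int_iff by blast

lemma coprime_int_R: "coprime_int R m R"
  using coprime_intI[OF _ R_one m_zero] R_one module_over_R unfolding ideal_of_iff by simp

lemma coprime_int_ideal_prod:
  assumes a: "coprime_int R m a" and b: "coprime_int R m b"
  shows "coprime_int R m (ideal_prod a b)"
proof -
  obtain x y where xy: "x \<in> a" "y \<in> m" "x + y = 1"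
    using a by (rule coprime_intE)
  obtain x' y' where xy': "x' \<in> b" "y' \<in> m" "x' + y' = 1"
    using b by (rule coprime_intE)
  have ia: "a \<subseteq> R" "module_over R a" and ib: "b \<subseteq> R" "module_over R b"
    using a b coprime_int_subset coprime_int_module by auto
  have "ideal_of R (ideal_prod a b)"
    unfolding ideal_of_iff using ideal_prod_subset_R ia ib module_over_ideal_prod by blast
  moreover have "x * x' \<in> ideal_prod a b"
    using xy(1) xy'(1) by (rule ideal_prod_mem)
  moreover have "x * y' + x' * y + y * y' \<in> m"
    using xy xy' ia ib m_subset_R by (blast intro: m_add m_smult)
  moreover have "x * x' + (x * y' + x' * y + y * y') = 1"
    using arg_cong2[OF xy(3) xy'(3), of "(*)"] by (simp add: algebra_simps)
  ultimately show ?thesis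
    by (rule coprime_intI)
qed

lemma coprime_int_principal_iff:
  "a \<in> R \<Longrightarrow> coprime_int R m (principal R a) \<longleftrightarrow> isum (principal R a) m = R"
  unfolding coprime_int_def using ideal_of_principal by blast

lemma coprime_principalI: "x \<in> R \<Longrightarrow> y \<in> m \<Longrightarrow> x + y = 1 \<Longrightarrow> isum (principal R x) m = R"
  using coprime_intI[OF ideal_of_principal generator_in_principal] coprime_int_principal_iff
  by blast

lemma Jstar_iff:
  "I \<in> Jstar F R m \<longleftrightarrow> invertible_frac F R I \<and>
     (\<exists>a b. coprime_int R m a \<and> coprime_int R m b \<and> invertible_frac F R b \<and>
            I = ideal_prod a (iinv F R b))"
  unfolding Jstar_def coprime_frac_def by blast

lemma module_over_Jstar: "I \<in> Jstar F R m \<Longrightarrow> module_over R I"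
  unfolding Jstar_iff invertible_frac_def using frac_ideal_module by blast

lemma Jstar_of_coprime_int: "coprime_int R m a \<Longrightarrow> invertible_frac F R a \<Longrightarrow> a \<in> Jstar F R m"
  unfolding Jstar_iff
  using coprime_int_R invertible_frac_R iinv_R ideal_prod_unit_right[OF R_one] coprime_int_module
  by metis

lemma R_in_Jstar: "R \<in> Jstar F R m"
  using Jstar_of_coprime_int coprime_int_R invertible_frac_R by blast

lemma Jstar_ideal_prod:
  assumes I: "I \<in> Jstar F R m" and J: "J \<in> Jstar F R m"
  shows "ideal_prod I J \<in> Jstar F R m"
proof -
  obtain a b where ab: "coprime_int R m a" "coprime_int R m b" "invertible_frac F R b"
    "I = ideal_prod a (iinv F R b)"
    using I unfolding Jstar_iff by blast
  obtain c d where cd: "coprime_int R m c" "coprime_int R m d" "invertible_frac F R d"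
    "J = ideal_prod c (iinv F R d)"
    using J unfolding Jstar_iff by blast
  have "ideal_prod I J = ideal_prod (ideal_prod a c) (ideal_prod (iinv F R b) (iinv F R d))"
    using ab(4) cd(4) by (simp add: ac_simps)
  also have "\<dots> = ideal_prod (ideal_prod a c) (iinv F R (ideal_prod b d))"
    using invertible_frac_ideal_prod(2)[OF ab(3) cd(3)] by simp
  moreover have "invertible_frac F R (ideal_prod I J)"
    using I J invertible_frac_ideal_prod(1) unfolding Jstar_iff by blast
  ultimately show ?thesis
    unfolding Jstar_iff
    using coprime_int_ideal_prod[OF ab(1) cd(1)] coprime_int_ideal_prod[OF ab(2) cd(2)]
      invertible_frac_ideal_prod(1)[OF ab(3) cd(3)]
    by blast
qed

lemma iinv_in_Jstar:
  assumes I: "I \<in> Jstar F R m"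
  shows "iinv F R I \<in> Jstar F R m"
proof -
  obtain a b where ab: "coprime_int R m a" "coprime_int R m b" "invertible_frac F R b"
    "I = ideal_prod a (iinv F R b)"
    and inv: "invertible_frac F R I"
    using I unfolding Jstar_iff by blast
  have "ideal_prod I b = a"
    using ideal_prod_iinv_cancel[OF ab(3) coprime_int_module[OF ab(1)]] ab(4)
    by (simp add: ideal_prod_commute)
  then have a: "invertible_frac F R a"
    using invertible_frac_ideal_prod(1)[OF inv ab(3)] by simp
  have "iinv F R I = ideal_prod (iinv F R a) (iinv F R (iinv F R b))"
    using ab(4) invertible_frac_ideal_prod(2)[OF a invertible_frac_iinv(3)[OF ab(3)]] by simp
  also have "\<dots> = ideal_prod b (iinv F R a)"
    using iinv_unique[OF invertible_frac_iinv(1)[OF ab(3)]] ab(3) invertible_frac_iinv(2)[OF ab(3)]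
    unfolding invertible_frac_def by (metis ideal_prod_commute)
  finally show ?thesis
    using ab(1,2) a invertible_frac_iinv(3)[OF inv] unfolding Jstar_iff by blast
qed

lemma comm_group_Jgrp: "comm_group (Jgrp F R m)"
proof (rule comm_groupI; simp)
  show "\<And>x y. x \<in> Jstar F R m \<Longrightarrow> y \<in> Jstar F R m \<Longrightarrow> ideal_prod x y \<in> Jstar F R m"
    by (rule Jstar_ideal_prod)
  show "R \<in> Jstar F R m"
    by (rule R_in_Jstar)
  show "\<And>x y z. ideal_prod (ideal_prod x y) z = ideal_prod x (ideal_prod y z)"
    by (rule ideal_prod_assoc)
  show "\<And>x y. ideal_prod x y = ideal_prod y x"
    by (rule ideal_prod_commute)
  show "\<And>x. x \<in> Jstar F R m \<Longrightarrow> ideal_prod R x = x"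
    using ideal_prod_unit_left[OF R_one] module_over_Jstar by blast
  show "\<And>x. x \<in> Jstar F R m \<Longrightarrow> \<exists>y\<in>Jstar F R m. ideal_prod y x = R"
    using iinv_in_Jstar invertible_frac_iinv(2) Jstar_iff ideal_prod_commute by metis
qed

lemma cong1_mult:
  assumes "cong1 R m \<alpha>" "cong1 R m \<beta>"
  shows "cong1 R m (\<alpha> * \<beta>)"
proof -
  obtain a b where ab: "a \<in> R" "b \<in> R" "b \<noteq> 0" "\<alpha> = a / b"
    "coprime_int R m (principal R a)" "coprime_int R m (principal R b)" "a - b \<in> m"
    using assms(1) coprime_int_principal_iff unfolding cong1_def by blast
  obtain c d where cd: "c \<in> R" "d \<in> R" "d \<noteq> 0" "\<beta> = c / d"
    "coprime_int R m (principal R c)" "coprime_int R m (principal R d)" "c - d \<in> m"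
    using assms(2) coprime_int_principal_iff unfolding cong1_def by blast
  have "coprime_int R m (principal R (a * c))" "coprime_int R m (principal R (b * d))"
    using coprime_int_ideal_prod ab(5,6) cd(5,6) by (simp_all flip: ideal_prod_principal)
  moreover have "a * c - b * d = a * (c - d) + d * (a - b)"
    by (simp add: algebra_simps)
  then have "a * c - b * d \<in> m"
    using ab cd by (simp add: m_add m_smult)
  ultimately show ?thesis
    unfolding cong1_def using ab cd R_mult coprime_int_principal_iff
    by (intro bexI[of _ "a * c"] bexI[of _ "b * d"]) auto
qed

lemma cong1_inverse:
  assumes "cong1 R m \<alpha>" "\<alpha> \<noteq> 0"
  shows "cong1 R m (inverse \<alpha>)"
proof -
  obtain a b where ab: "a \<in> R" "b \<in> R" "b \<noteq> 0" "\<alpha> = a / b"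
    "isum (principal R a) m = R" "isum (principal R b) m = R" "a - b \<in> m"
    using assms(1) unfolding cong1_def by blast
  moreover have "b - a \<in> m"
    using m_diff[OF m_zero ab(7)] by simp
  ultimately show ?thesis
    unfolding cong1_def using assms(2) by (intro bexI[of _ b] bexI[of _ a]) auto
qed

lemma cong1_of_diff_one_mem:
  assumes "x \<in> R" "x - 1 \<in> m"
  shows "cong1 R m x"
proof -
  have "isum (principal R x) m = R"
    using coprime_principalI[OF assms(1) m_diff[OF m_zero assms(2)]] by simp
  moreover have "isum (principal R 1) m = R"
    using coprime_principalI[OF R_one m_zero] by simp
  ultimately show ?thesis
    unfolding cong1_def using assms R_one by (intro bexI[of _ x] bexI[of _ 1]) auto
qed

lemma principal_in_PmsI:
  "\<alpha> \<in> F \<Longrightarrow> \<alpha> \<noteq> 0 \<Longrightarrow> cong1 R m \<alpha> \<Longrightarrow> \<forall>\<rho>\<in>S. \<rho> \<alpha> > 0 \<Longrightarrow> principal R \<alpha> \<in> Pms F R m S"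
  unfolding Pms_def by blast

lemma PmsE:
  assumes "p \<in> Pms F R m S"
  obtains \<alpha> where "p = principal R \<alpha>" "\<alpha> \<in> F" "\<alpha> \<noteq> 0" "cong1 R m \<alpha>" "\<forall>\<rho>\<in>S. \<rho> \<alpha> > 0"
  using assms unfolding Pms_def by blast

lemma Pms_subset_Jstar: "Pms F R m S \<subseteq> Jstar F R m"
proof
  fix p assume "p \<in> Pms F R m S"
  then obtain \<alpha> where \<alpha>: "p = principal R \<alpha>" "\<alpha> \<in> F" "\<alpha> \<noteq> 0" "cong1 R m \<alpha>"
    by (rule PmsE)
  then obtain a b where ab: "a \<in> R" "b \<in> R" "b \<noteq> 0" "\<alpha> = a / b"
    "isum (principal R a) m = R" "isum (principal R b) m = R"
    unfolding cong1_def by blast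
  have b: "b \<in> F"
    using ab(2) R_subset_F by blast
  have "p = ideal_prod (principal R a) (iinv F R (principal R b))"
    using \<alpha>(1) ab(4) invertible_frac_principal(2)[OF b ab(3)]
    by (simp add: ideal_prod_principal divide_inverse)
  moreover have "invertible_frac F R p"
    using \<alpha> invertible_frac_principal(1) by simp
  moreover have "coprime_int R m (principal R a)" "coprime_int R m (principal R b)"
    using ab coprime_int_principal_iff by simp_all
  ultimately show "p \<in> Jstar F R m"
    unfolding Jstar_iff using invertible_frac_principal(1)[OF b ab(3)] by blast
qed

lemma subgroup_Pms:
  assumes S: "\<forall>\<rho>\<in>S. real_embedding F \<rho>"
  shows "subgroup (Pms F R m S) (Jgrp F R m)"
proof -
  interpret Jgrp: comm_group "Jgrp F R m"
    by (rule comm_group_Jgrp)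
  show ?thesis
  proof (rule Jgrp.subgroupI)
    show "Pms F R m S \<subseteq> carrier (Jgrp F R m)"
      using Pms_subset_Jstar by simp
    have "principal R 1 \<in> Pms F R m S"
      using S cong1_of_diff_one_mem[OF R_one] m_zero F_one
      unfolding real_embedding_def by (intro principal_in_PmsI) auto
    then show "Pms F R m S \<noteq> {}"
      by blast
  next
    fix p assume p: "p \<in> Pms F R m S"
    then obtain \<alpha> where \<alpha>: "p = principal R \<alpha>" "\<alpha> \<in> F" "\<alpha> \<noteq> 0" "cong1 R m \<alpha>" "\<forall>\<rho>\<in>S. \<rho> \<alpha> > 0"
      by (rule PmsE)
    have q: "principal R (inverse \<alpha>) \<in> Pms F R m S"
      using \<alpha> S F_inverse cong1_inverse real_embedding_inverse_pos by (intro principal_in_PmsI) auto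
    have "ideal_prod (principal R (inverse \<alpha>)) p = R"
      using \<alpha> by (simp add: ideal_prod_principal principal_one)
    then have "inv\<^bsub>Jgrp F R m\<^esub> p = principal R (inverse \<alpha>)"
      using Jgrp.inv_equality[of "principal R (inverse \<alpha>)" p] q p Pms_subset_Jstar by auto
    with q show "inv\<^bsub>Jgrp F R m\<^esub> p \<in> Pms F R m S"
      by simp
  next
    fix p q assume "p \<in> Pms F R m S" "q \<in> Pms F R m S"
    then obtain \<alpha> \<beta> where \<alpha>: "p = principal R \<alpha>" "\<alpha> \<in> F" "\<alpha> \<noteq> 0" "cong1 R m \<alpha>" "\<forall>\<rho>\<in>S. \<rho> \<alpha> > 0"
      and \<beta>: "q = principal R \<beta>" "\<beta> \<in> F" "\<beta> \<noteq> 0" "cong1 R m \<beta>" "\<forall>\<rho>\<in>S. \<rho> \<beta> > 0"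
      by (metis PmsE)
    have "\<forall>\<rho>\<in>S. \<rho> (\<alpha> * \<beta>) > 0"
      using S \<alpha> \<beta> unfolding real_embedding_def by auto
    then show "p \<otimes>\<^bsub>Jgrp F R m\<^esub> q \<in> Pms F R m S"
      using \<alpha> \<beta> F_mult cong1_mult by (simp add: ideal_prod_principal principal_in_PmsI)
  qed
qed

lemma invertible_frac_of_coprime_divisor:
  assumes a: "coprime_int R m a" "a \<noteq> {0}"
    and K: "module_over R K" "K \<subseteq> F" and m_eq: "ideal_prod a K = m"
  shows "invertible_frac F R a"
proof -
  have a_ideal: "ideal_of R a" "a \<subseteq> R"
    using a(1) coprime_int_ideal coprime_int_subset by blast+
  obtain x y where xy: "x \<in> a" "y \<in> m" "x + y = 1"
    using a(1) by (rule coprime_intE)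
  define J where "J = isum R K"
  have J: "module_over R J" "J \<subseteq> F" "1 \<in> J" "K \<subseteq> J"
    unfolding J_def using module_over_isum[OF module_over_R K(1)] R_subset_F K(2) F_add
      isum_memI[OF R_one module_over_zero[OF K(1)]] isum_memI[OF R_zero]
    by (auto elim!: isum_memE)
  have "ideal_prod a J \<subseteq> R"
    using module_over_R
  proof (rule ideal_prod_subset_module)
    fix u j assume u: "u \<in> a" and "j \<in> J"
    then obtain r k where rk: "r \<in> R" "k \<in> K" "j = r + k"
      unfolding J_def by (auto elim: isum_memE)
    have "u * r \<in> R" "u * k \<in> R"
      using u rk a_ideal(2) R_mult ideal_prod_mem[OF u rk(2)] m_eq m_subset_R by blast+
    then show "u * j \<in> R"
      using rk(3) R_add by (simp add: distrib_left)
  qed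
  moreover have "R \<subseteq> ideal_prod a J"
  proof
    fix r assume "r \<in> R"
    have "x * 1 + y \<in> ideal_prod a J"
      using ideal_prod_mem[OF xy(1) J(3)] xy(2) m_eq ideal_prod_mono[OF order_refl J(4)]
      by (blast intro: ideal_prod_add)
    then show "r \<in> ideal_prod a J"
      using xy(3) module_over_smult[OF module_over_ideal_prod[OF J(1)] \<open>r \<in> R\<close>] by force
  qed
  ultimately show ?thesis
    using invertible_fracI frac_ideal_of_ideal[OF a_ideal(1) a(2)] J(1,2) by blast
qed

lemma coprime_int_principal_iinv:
  assumes d: "invertible_frac F R d" "d \<subseteq> R" and \<alpha>: "\<alpha> \<in> d" "\<alpha> - 1 \<in> m"
  shows "coprime_int R m (ideal_prod (principal R \<alpha>) (iinv F R d))"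
proof (rule coprime_intI)
  have "module_over R d"
    using d(1) frac_ideal_module unfolding invertible_frac_def by blast
  then have "principal R \<alpha> \<subseteq> d"
    using \<alpha>(1) by (auto elim!: principal_memE simp: mult.commute intro: module_over_smult)
  then have "ideal_prod (principal R \<alpha>) (iinv F R d) \<subseteq> R"
    using ideal_prod_mono[OF _ order_refl] invertible_frac_iinv(2)[OF d(1)] by blast
  then show "ideal_of R (ideal_prod (principal R \<alpha>) (iinv F R d))"
    unfolding ideal_of_iff using module_over_ideal_prod_left[OF module_over_principal] by blast
  have "1 \<in> iinv F R d"
    unfolding iinv_def using F_one d(2) by auto
  then show "\<alpha> \<in> ideal_prod (principal R \<alpha>) (iinv F R d)"
    using ideal_prod_mem[OF generator_in_principal] by fastforce
  show "1 - \<alpha> \<in> m"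
    using m_diff[OF m_zero \<alpha>(2)] by simp
qed simp

lemma exists_nonzero_cong_one:
  assumes d: "coprime_int R m d" "d \<noteq> {0}"
  shows "\<exists>x\<in>d. x \<noteq> 0 \<and> x - 1 \<in> m"
proof -
  obtain x y where xy: "x \<in> d" "y \<in> m" "x + y = 1"
    using d(1) by (rule coprime_intE)
  show ?thesis
  proof (cases "x = 0")
    case False
    have "x - 1 = 0 - y"
      using xy(3) by (simp add: algebra_simps)
    then show ?thesis
      using False xy m_diff[OF m_zero] by auto
  next
    case True
    then have "1 \<in> m"
      using xy by simp
    obtain z where "z \<in> d" "z \<noteq> 0"
      using d(2) module_over_zero[OF coprime_int_module[OF d(1)]] by blast
    moreover have "z - 1 \<in> m"
      using m_diff[OF m_smult[OF _ \<open>1 \<in> m\<close>] \<open>1 \<in> m\<close>, of z] \<open>z \<in> d\<close>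
        coprime_int_subset[OF d(1)] by auto
    ultimately show ?thesis
      by blast
  qed
qed

lemma principal_square_in_Pms:
  assumes "\<forall>\<rho>\<in>S. real_embedding F \<rho>" "x \<in> R" "x \<noteq> 0" "x * x - 1 \<in> m"
  shows "principal R (x * x) \<in> Pms F R m S"
  using assms R_mult R_subset_F cong1_of_diff_one_mem real_embedding_square_pos
  by (intro principal_in_PmsI) auto

end

section \<open>Extension and contraction along an inclusion of orders\<close>

locale nf_order_extension = A: nf_order F R + B: nf_order_modulus F R' m for F R R' m +
  assumes order_subset: "R \<subseteq> R'" and m_subset_R: "m \<subseteq> R"
begin

sublocale A: nf_order_modulus F R m
  using m_subset_R module_over_antimono[OF B.module_over_m order_subset]
  by unfold_locales (simp add: A.ideal_of_iff)

lemma extension_ideal_prod: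
  "ideal_prod (ideal_prod X Y) R' = ideal_prod (ideal_prod X R') (ideal_prod Y R')"
proof -
  have "ideal_prod (ideal_prod X R') (ideal_prod Y R') = ideal_prod (ideal_prod X Y) (ideal_prod R' R')"
    by (simp add: ac_simps)
  then show ?thesis
    by (simp add: B.ideal_prod_R_R)
qed

lemma module_over_extension: "module_over R' (ideal_prod X R')"
  by (rule module_over_ideal_prod[OF B.module_over_R])

lemma subset_extension: "X \<subseteq> ideal_prod X R'"
  using ideal_prod_mem[OF _ B.R_one] by fastforce

lemma extension_principal: "ideal_prod (principal R g) R' = principal R' g"
proof
  show "ideal_prod (principal R g) R' \<subseteq> principal R' g"
    using B.module_over_principal
  proof (rule ideal_prod_subset_module)
    fix x y assume "x \<in> principal R g" "y \<in> R'"
    then show "x * y \<in> principal R' g"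
      using order_subset B.R_mult B.principal_mem
      by (auto elim!: A.principal_memE simp: mult.assoc)
  qed
  show "principal R' g \<subseteq> ideal_prod (principal R g) R'"
    using ideal_prod_mem[OF A.generator_in_principal] by (auto elim!: B.principal_memE)
qed

lemma ideal_of_extension: "ideal_of R a \<Longrightarrow> ideal_of R' (ideal_prod a R')"
  using B.ideal_prod_subset_R order_subset module_over_extension
  unfolding A.ideal_of_iff B.ideal_of_iff by blast

lemma coprime_int_extension:
  assumes "coprime_int R m a"
  shows "coprime_int R' m (ideal_prod a R')"
proof -
  obtain x y where "x \<in> a" "y \<in> m" "x + y = 1"
    using assms by (rule A.coprime_intE)
  then show ?thesis
    using B.coprime_intI ideal_of_extension A.coprime_int_ideal[OF assms] subset_extension
    by blast
qed

lemma frac_ideal_extension: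
  assumes X: "frac_ideal F R X"
  shows "frac_ideal F R' (ideal_prod X R')"
proof -
  obtain d where d: "d \<in> R" "d \<noteq> 0" "\<forall>x\<in>X. d * x \<in> R"
    using X unfolding A.frac_ideal_iff by blast
  obtain x where "x \<in> X" "x \<noteq> 0"
    using A.frac_ideal_nonzero[OF X] by blast
  then have "ideal_prod X R' \<noteq> {0}"
    using subset_extension[of X] by auto
  moreover have "ideal_prod X R' \<subseteq> F"
    using A.ideal_prod_subset_F A.frac_ideal_subset[OF X] B.R_subset_F by blast
  moreover have "ideal_prod X R' \<subseteq> {z. d * z \<in> R'}"
  proof (rule ideal_prod_subsetI)
    fix x y assume "x \<in> X" "y \<in> R'"
    then have "(d * x) * y \<in> R'"
      using d order_subset B.R_mult by blast
    then show "x * y \<in> {z. d * z \<in> R'}"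
      by (simp add: ac_simps)
  qed (auto simp: B.R_zero B.R_add distrib_left)
  ultimately show ?thesis
    unfolding B.frac_ideal_iff using module_over_extension d order_subset by blast
qed

lemma invertible_frac_extension:
  assumes X: "invertible_frac F R X"
  shows "invertible_frac F R' (ideal_prod X R')"
    and "iinv F R' (ideal_prod X R') = ideal_prod (iinv F R X) R'"
proof -
  have inv: "ideal_prod (ideal_prod X R') (ideal_prod (iinv F R X) R') = R'"
    using A.invertible_frac_iinv(2)[OF X] extension_ideal_prod[symmetric]
      ideal_prod_unit_left[OF A.R_one module_over_antimono[OF B.module_over_R order_subset]]
    by simp
  have frac: "frac_ideal F R' (ideal_prod (iinv F R X) R')"
    using frac_ideal_extension A.invertible_frac_iinv(1)[OF X] by blast
  have "frac_ideal F R' (ideal_prod X R')"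
    using frac_ideal_extension X unfolding invertible_frac_def by blast
  with inv frac show "invertible_frac F R' (ideal_prod X R')"
    and "iinv F R' (ideal_prod X R') = ideal_prod (iinv F R X) R'"
    using B.iinv_unique unfolding invertible_frac_def by auto
qed

lemma Jstar_extension:
  assumes "a \<in> Jstar F R m"
  shows "ideal_prod a R' \<in> Jstar F R' m"
proof -
  obtain c d where cd: "coprime_int R m c" "coprime_int R m d" "invertible_frac F R d"
    "a = ideal_prod c (iinv F R d)"
    and a: "invertible_frac F R a"
    using assms unfolding A.Jstar_iff by blast
  have "ideal_prod a R' = ideal_prod (ideal_prod c R') (iinv F R' (ideal_prod d R'))"
    using cd(4) extension_ideal_prod invertible_frac_extension(2)[OF cd(3)] by simp
  then show ?thesis
    unfolding B.Jstar_iff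
    using invertible_frac_extension(1) a cd coprime_int_extension by blast
qed

lemma cong1_extension: "cong1 R m \<alpha> \<Longrightarrow> cong1 R' m \<alpha>"
  unfolding cong1_def
  using A.coprime_int_principal_iff B.coprime_int_principal_iff coprime_int_extension
    extension_principal order_subset
  by (metis subsetD)

lemma Pms_extension: "p \<in> Pms F R m S \<Longrightarrow> ideal_prod p R' \<in> Pms F R' m S"
  using cong1_extension extension_principal B.principal_in_PmsI by (metis A.PmsE)

lemma coprime_int_contraction:
  assumes b: "coprime_int R' m b"
  shows "coprime_int R m (b \<inter> R)"
proof -
  have b_ideal: "b \<subseteq> R'" "module_over R' b"
    using b B.coprime_int_subset B.coprime_int_module by blast+
  have "module_over R (b \<inter> R)"
    using module_over_antimono[OF b_ideal(2) order_subset] A.module_over_R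
    unfolding submodule_of_def by blast
  then have "ideal_of R (b \<inter> R)"
    unfolding A.ideal_of_iff by blast
  moreover obtain x y where xy: "x \<in> b" "y \<in> m" "x + y = 1"
    using b by (rule B.coprime_intE)
  moreover have "x = 1 - y"
    using xy(3) by (simp add: eq_diff_eq)
  then have "x \<in> R"
    using A.R_diff[OF A.R_one] xy(2) m_subset_R by blast
  ultimately show ?thesis
    using A.coprime_intI by blast
qed

lemma extension_contraction_coprime:
  assumes b: "coprime_int R' m b"
  shows "ideal_prod (b \<inter> R) R' = b"
proof
  have b_ideal: "b \<subseteq> R'" "module_over R' b"
    using b B.coprime_int_subset B.coprime_int_module by blast+
  show "ideal_prod (b \<inter> R) R' \<subseteq> b"
    using b_ideal(2)
  proof (rule ideal_prod_subset_module)
    fix x y assume "x \<in> b \<inter> R" "y \<in> R'"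
    then have "y * x \<in> b"
      using module_over_smult[OF b_ideal(2)] by blast
    then show "x * y \<in> b"
      by (simp add: mult.commute)
  qed
  show "b \<subseteq> ideal_prod (b \<inter> R) R'"
  proof
    fix z assume z: "z \<in> b"
    obtain x y where xy: "x \<in> b \<inter> R" "y \<in> m" "x + y = 1"
      using coprime_int_contraction[OF b] by (rule A.coprime_intE)
    have "z * y \<in> b \<inter> R"
      using module_over_smult[OF b_ideal(2) _ z, of y] B.m_smult[OF _ xy(2), of z]
        B.m_subset_R m_subset_R b_ideal(1) z xy(2)
      by (auto simp: mult.commute)
    then have "x * z + (z * y) * 1 \<in> ideal_prod (b \<inter> R) R'"
      using xy(1) z b_ideal(1) B.R_one by (blast intro: ideal_prod_add ideal_prod_mem)
    moreover have "x * z + (z * y) * 1 = (x + y) * z"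
      by (simp add: algebra_simps)
    ultimately show "z \<in> ideal_prod (b \<inter> R) R'"
      using xy(3) by simp
  qed
qed

lemma contraction_extension_coprime:
  assumes a: "coprime_int R m a"
  shows "ideal_prod a R' \<inter> R = a"
proof
  have a_ideal: "a \<subseteq> R" "module_over R a"
    using a A.coprime_int_subset A.coprime_int_module by blast+
  show "a \<subseteq> ideal_prod a R' \<inter> R"
    using subset_extension a_ideal(1) by blast
  show "ideal_prod a R' \<inter> R \<subseteq> a"
  proof
    fix z assume z: "z \<in> ideal_prod a R' \<inter> R"
    obtain x y where xy: "x \<in> a" "y \<in> m" "x + y = 1"
      using a by (rule A.coprime_intE)
    have "ideal_prod a R' \<subseteq> {w. w * y \<in> a}"
    proof (rule ideal_prod_subsetI)
      fix u v assume "u \<in> a" "v \<in> R'"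
      then have "(v * y) * u \<in> a"
        using module_over_smult[OF a_ideal(2)] B.m_smult[OF _ xy(2)] m_subset_R by blast
      then show "u * v \<in> {w. w * y \<in> a}"
        by (simp add: ac_simps)
    qed (use a_ideal(2) module_over_zero module_over_add in \<open>auto simp: distrib_right\<close>)
    then have "z * x + z * y \<in> a"
      using z xy(1) module_over_add[OF a_ideal(2)] module_over_smult[OF a_ideal(2)] by blast
    then show "z \<in> a"
      using xy(3) by (simp flip: distrib_left)
  qed
qed

lemma invertible_frac_of_extension:
  assumes a: "coprime_int R m a" and inv: "invertible_frac F R' (ideal_prod a R')"
  shows "invertible_frac F R a"
proof -
  define K where "K = ideal_prod m (iinv F R' (ideal_prod a R'))"
  have K: "module_over R' K" "K \<subseteq> F"
    unfolding K_def using module_over_ideal_prod_left[OF B.module_over_m]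
      B.ideal_prod_subset_F B.m_subset_R B.R_subset_F B.invertible_frac_iinv(1)[OF inv]
      B.frac_ideal_subset by blast+
  have "m = ideal_prod (ideal_prod a R') K"
    unfolding K_def using B.ideal_prod_iinv_cancel[OF inv B.module_over_m] by simp
  also have "\<dots> = ideal_prod a K"
    using ideal_prod_assoc[of a R' K] ideal_prod_unit_left[OF B.R_one K(1)] by simp
  finally have "ideal_prod a K = m" ..
  moreover have "a \<noteq> {0}"
    using inv ideal_prod_zero_left B.frac_ideal_iff unfolding invertible_frac_def by force
  ultimately show ?thesis
    using A.invertible_frac_of_coprime_divisor a module_over_antimono[OF K(1) order_subset] K(2)
    by blast
qed

lemma contraction_in_Jstar:
  assumes "coprime_int R' m b" "invertible_frac F R' b"
  shows "b \<inter> R \<in> Jstar F R m"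
  using assms coprime_int_contraction extension_contraction_coprime invertible_frac_of_extension
    A.Jstar_of_coprime_int
  by metis

lemma orders_eq_if_one_in_m: "1 \<in> m \<Longrightarrow> R' = R"
  using B.m_smult[of _ 1] m_subset_R order_subset by force

lemma cong1_contraction:
  assumes "cong1 R' m \<alpha>"
  shows "cong1 R m \<alpha>"
proof (cases "1 \<in> m")
  case True
  then show ?thesis
    using assms orders_eq_if_one_in_m by simp
next
  case False
  obtain u v where uv: "u \<in> R'" "v \<in> R'" "v \<noteq> 0" "\<alpha> = u / v"
    "coprime_int R' m (principal R' v)" "u - v \<in> m"
    using assms B.coprime_int_principal_iff unfolding cong1_def by blast
  obtain t y where ty: "t \<in> R'" "y \<in> m" "v * t + y = 1"
    using uv(5) by (auto elim!: B.coprime_intE B.principal_memE)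
  define w where "w = v * t"
  have w: "w = 1 - y"
    using ty(3) unfolding w_def by (simp add: eq_diff_eq)
  then have "w \<in> R" "w \<noteq> 0"
    using A.R_diff[OF A.R_one] ty(2) m_subset_R False by auto
  have "u * t - w = t * (u - v)"
    unfolding w_def by (simp add: algebra_simps)
  then have diff: "u * t - w \<in> m"
    using B.m_smult[OF ty(1) uv(6)] by simp
  then have "u * t \<in> R"
    using A.R_add[OF \<open>w \<in> R\<close>, of "u * t - w"] m_subset_R by auto
  moreover have "\<alpha> = (u * t) / w"
    using uv(4) \<open>w \<noteq> 0\<close> unfolding w_def by simp
  moreover have "isum (principal R (u * t)) m = R"
    using A.coprime_principalI[OF \<open>u * t \<in> R\<close> A.m_diff[OF ty(2) diff]] w by simp
  moreover have "isum (principal R w) m = R"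
    using A.coprime_principalI[OF \<open>w \<in> R\<close> ty(2)] w by simp
  ultimately show ?thesis
    unfolding cong1_def using \<open>w \<in> R\<close> \<open>w \<noteq> 0\<close> diff by blast
qed

lemma principal_eq_of_extension_eq:
  assumes a: "a \<in> Jstar F R m" and \<alpha>: "cong1 R m \<alpha>"
    and ext: "ideal_prod a R' = principal R' \<alpha>"
  shows "a = principal R \<alpha>"
proof -
  obtain u v where uv: "u \<in> R" "v \<in> R" "v \<noteq> 0" "\<alpha> = u / v"
    "coprime_int R m (principal R u)" "coprime_int R m (principal R v)"
    using \<alpha> A.coprime_int_principal_iff unfolding cong1_def by blast
  obtain c d where cd: "coprime_int R m c" "coprime_int R m d" "invertible_frac F R d"
    "a = ideal_prod c (iinv F R d)"
    using a unfolding A.Jstar_iff by blast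
  define V where "V = principal R v"
  have c: "c = ideal_prod a d"
    using A.ideal_prod_iinv_cancel[OF cd(3) A.coprime_int_module[OF cd(1)]] cd(4)
    by (simp add: ideal_prod_commute)
  have u: "principal R u = ideal_prod (principal R \<alpha>) V"
    using uv(3,4) unfolding V_def by (simp add: A.ideal_prod_principal)
  have "ideal_prod (ideal_prod a (ideal_prod d V)) R'
      = ideal_prod (ideal_prod (principal R \<alpha>) (ideal_prod d V)) R'"
    using ext extension_principal by (simp add: extension_ideal_prod)
  then have "ideal_prod (ideal_prod c V) R' = ideal_prod (ideal_prod d (principal R u)) R'"
    using c u by (simp add: ac_simps)
  then have "ideal_prod c V = ideal_prod d (principal R u)"
    using contraction_extension_coprime A.coprime_int_ideal_prod cd(1,2) uv(5,6)
    unfolding V_def by metis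
  then have "ideal_prod a (ideal_prod d V) = ideal_prod (principal R \<alpha>) (ideal_prod d V)"
    using c u by (simp add: ac_simps)
  moreover have "invertible_frac F R (ideal_prod d V)"
    using A.invertible_frac_ideal_prod(1)[OF cd(3) A.invertible_frac_principal(1)] uv(2,3)
      A.R_subset_F unfolding V_def by blast
  ultimately show ?thesis
    using A.ideal_prod_cancel_right A.module_over_Jstar[OF a] A.module_over_principal by blast
qed

lemma in_Pms_of_extension_in_Pms:
  assumes "a \<in> Jstar F R m" "ideal_prod a R' \<in> Pms F R' m S"
  shows "a \<in> Pms F R m S"
proof -
  obtain \<alpha> where "ideal_prod a R' = principal R' \<alpha>" "\<alpha> \<in> F" "\<alpha> \<noteq> 0" "cong1 R' m \<alpha>"
    "\<forall>\<rho>\<in>S. \<rho> \<alpha> > 0"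
    using assms(2) by (rule B.PmsE)
  then show ?thesis
    using assms(1) cong1_contraction principal_eq_of_extension_eq A.principal_in_PmsI by metis
qed

lemma Jstar_coset_meets_extension:
  assumes J: "J \<in> Jstar F R' m" and S: "\<forall>\<rho>\<in>S. real_embedding F \<rho>"
  shows "\<exists>p\<in>Pms F R' m S. \<exists>a\<in>Jstar F R m. ideal_prod p J = ideal_prod a R'"
proof -
  obtain c d where cd: "coprime_int R' m c" "coprime_int R' m d" "invertible_frac F R' d"
    "J = ideal_prod c (iinv F R' d)"
    using J unfolding B.Jstar_iff by blast
  have d: "d \<subseteq> R'" "module_over R' d" "d \<noteq> {0}"
    using cd(2,3) B.coprime_int_subset B.coprime_int_module B.frac_ideal_iff
    unfolding invertible_frac_def by blast+
  obtain x where x: "x \<in> d" "x \<noteq> 0" "x - 1 \<in> m"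
    using B.exists_nonzero_cong_one[OF cd(2) d(3)] by blast
  have "x \<in> R'"
    using x(1) d(1) by blast
  have "x * x - 1 = (x + 1) * (x - 1)"
    by (simp add: algebra_simps)
  then have sq: "x * x - 1 \<in> m"
    using B.m_smult[OF B.R_add[OF \<open>x \<in> R'\<close> B.R_one] x(3)] by simp
  \<comment> \<open>The square is positive at every real embedding.\<close>
  define p where "p = principal R' (x * x)"
  have p: "p \<in> Pms F R' m S"
    unfolding p_def using B.principal_square_in_Pms[OF S \<open>x \<in> R'\<close> x(2) sq] .
  have "x * x \<in> d"
    using module_over_smult[OF d(2) \<open>x \<in> R'\<close> x(1)] .
  then have "coprime_int R' m (ideal_prod c (ideal_prod p (iinv F R' d)))"
    unfolding p_def using B.coprime_int_principal_iinv[OF cd(3) d(1) _ sq] cd(1)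
    by (blast intro: B.coprime_int_ideal_prod)
  then have "coprime_int R' m (ideal_prod p J)"
    unfolding cd(4) by (simp add: ac_simps)
  moreover have "invertible_frac F R' (ideal_prod p J)"
    using B.Jstar_ideal_prod[OF subsetD[OF B.Pms_subset_Jstar p] J] B.Jstar_iff by blast
  ultimately show ?thesis
    using p contraction_in_Jstar extension_contraction_coprime by metis
qed

end

section \<open>The isomorphism of ray class groups\<close>

lemma (in group_hom) the_elem_image_kernel_coset:
  assumes "a \<in> carrier G"
  shows "the_elem (h ` (kernel G H h #> a)) = h a"
proof (rule the_elem_image_unique)
  show "kernel G H h #> a \<noteq> {}"
    using G.rcos_self[OF assms subgroup_kernel] by blast
  fix y assume "y \<in> kernel G H h #> a"
  then obtain n where "n \<in> kernel G H h" "y = n \<otimes>\<^bsub>G\<^esub> a"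
    unfolding r_coset_def by blast
  then show "h y = h a"
    using assms by (simp add: kernel_def)
qed

lemma quotient_iso_of_hom:
  assumes N: "N \<lhd> G" and N': "N' \<lhd> G'" and f: "f \<in> hom G G'"
    and preimage: "\<And>a. a \<in> carrier G \<Longrightarrow> f a \<in> N' \<longleftrightarrow> a \<in> N"
    and cosets: "\<And>b. b \<in> carrier G' \<Longrightarrow> \<exists>p\<in>N'. \<exists>a\<in>carrier G. p \<otimes>\<^bsub>G'\<^esub> b = f a"
  shows "\<exists>h. h \<in> iso (G Mod N) (G' Mod N') \<and> (\<forall>a\<in>carrier G. h (N #>\<^bsub>G\<^esub> a) = N' #>\<^bsub>G'\<^esub> f a)"
proof -
  interpret G: group G
    using N by (rule normal.axioms(2))
  interpret G': group G'
    using N' by (rule normal.axioms(2))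
  interpret N': subgroup N' G'
    using N' by (rule normal_imp_subgroup)
  define \<phi> where "\<phi> a = N' #>\<^bsub>G'\<^esub> f a" for a
  have "\<phi> \<in> hom G (G' Mod N')"
    unfolding \<phi>_def using hom_compose[OF f normal.r_coset_hom_Mod[OF N']] by (simp add: comp_def)
  then interpret \<phi>: group_hom G "G' Mod N'" \<phi>
    using G.is_group normal.factorgroup_is_group[OF N'] unfolding group_hom_def group_hom_axioms_def
    by blast
  have f_carrier: "f a \<in> carrier G'" if "a \<in> carrier G" for a
    using f that by (rule hom_in_carrier)
  have kernel: "kernel G (G' Mod N') \<phi> = N"
    unfolding kernel_def \<phi>_def one_FactGroup
    using G'.coset_join1[OF _ f_carrier N'.subgroup_axioms] G'.coset_join2[OF f_carrier N'.subgroup_axioms]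
      preimage normal_imp_subgroup[OF N] subgroup.subset
    by blast
  have "\<phi> ` carrier G = carrier (G' Mod N')"
  proof
    show "\<phi> ` carrier G \<subseteq> carrier (G' Mod N')"
      by auto
    show "carrier (G' Mod N') \<subseteq> \<phi> ` carrier G"
    proof
      fix X assume "X \<in> carrier (G' Mod N')"
      then obtain b where b: "b \<in> carrier G'" "X = N' #>\<^bsub>G'\<^esub> b"
        unfolding carrier_FactGroup by blast
      then obtain p a where pa: "p \<in> N'" "a \<in> carrier G" "p \<otimes>\<^bsub>G'\<^esub> b = f a"
        using cosets by blast
      have "\<phi> a = (N' #>\<^bsub>G'\<^esub> p) #>\<^bsub>G'\<^esub> b"
        unfolding \<phi>_def using pa b(1) G'.coset_mult_assoc by (metis N'.mem_carrier N'.subset)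
      also have "\<dots> = X"
        using G'.coset_join2[OF N'.mem_carrier[OF pa(1)] N'.subgroup_axioms pa(1)] b(2) by simp
      finally show "X \<in> \<phi> ` carrier G"
        using pa(2) by blast
    qed
  qed
  then have "(\<lambda>X. the_elem (\<phi> ` X)) \<in> iso (G Mod N) (G' Mod N')"
    using \<phi>.FactGroup_iso_set kernel by simp
  with \<phi>.the_elem_image_kernel_coset show ?thesis
    unfolding kernel \<phi>_def by blast
qed

theorem proposition3p5:
  fixes F R R' m :: "complex set" and S :: "(complex \<Rightarrow> real) set"
  assumes "order_of F R" and "order_of F R'" and "R \<subseteq> R'"
    and "ideal_of R' m" and "m \<subseteq> R"
    and "\<forall>\<rho>\<in>S. real_embedding F \<rho>"
  shows "\<exists>h. h \<in> iso (Clms F R m S) (Clms F R' m S) \<and>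
           (\<forall>a\<in>Jstar F R m. h (Pms F R m S #>\<^bsub>Jgrp F R m\<^esub> a) =
                              Pms F R' m S #>\<^bsub>Jgrp F R' m\<^esub> ideal_prod a R')"
proof -
  interpret nf_order_extension F R R' m
    by unfold_locales (fact assms)+
  have "\<exists>h. h \<in> iso (Jgrp F R m Mod Pms F R m S) (Jgrp F R' m Mod Pms F R' m S) \<and>
      (\<forall>a\<in>carrier (Jgrp F R m). h (Pms F R m S #>\<^bsub>Jgrp F R m\<^esub> a) =
                              Pms F R' m S #>\<^bsub>Jgrp F R' m\<^esub> ideal_prod a R')"
  proof (rule quotient_iso_of_hom)
    show "Pms F R m S \<lhd> Jgrp F R m" "Pms F R' m S \<lhd> Jgrp F R' m"
      using comm_group.subgroup_imp_normal A.comm_group_Jgrp B.comm_group_Jgrp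
        A.subgroup_Pms B.subgroup_Pms assms(6) by blast+
    show "(\<lambda>a. ideal_prod a R') \<in> hom (Jgrp F R m) (Jgrp F R' m)"
      using Jstar_extension extension_ideal_prod by (intro homI) simp_all
    show "ideal_prod a R' \<in> Pms F R' m S \<longleftrightarrow> a \<in> Pms F R m S" if "a \<in> carrier (Jgrp F R m)" for a
      using that Pms_extension in_Pms_of_extension_in_Pms by auto
    show "\<exists>p\<in>Pms F R' m S. \<exists>a\<in>carrier (Jgrp F R m). p \<otimes>\<^bsub>Jgrp F R' m\<^esub> b = ideal_prod a R'"
      if "b \<in> carrier (Jgrp F R' m)" for b
      using that Jstar_coset_meets_extension[OF _ assms(6)] by simp
  qed
  then show ?thesis
    unfolding Clms_def by simp
qed

end
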